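(* Let $C\subset\mathbb{R}^p$ be a closed convex pointed cone containing $0$ with nonempty interior such that $P\subset\mathrm{int}(C)\cup\{0\}$. There exists a constant $M(C,P)\ge0$ such that for all $K_1,K_2\in\mathcal{K}(C,P)$, $$\mathcal{H}\big(\mathcal{E}(K_1,P),\mathcal{E}(K_2,P)\big)\le M(C,P)\,\mathcal{H}(K_1,K_2).$$
   Context: $\mathbb{R}^p$ carries the Euclidean norm. $P\subset\mathbb{R}^p$ is a closed convex pointed ($P\cap(-P)=\{0\}$) cone containing $0$ with nonempty interior. For nonempty $S\subset\mathbb{R}^p$ and such a cone $Q$, $\mathcal{E}(S,Q)=\{y\in S:(y-Q)\cap S=\{y\}\}$. $\mathcal{K}(C,P)$ is the set of nonempty compact $K\subset\mathbb{R}^p$ with $\mathcal{E}(K,P)=\mathcal{E}(K,C)$. For nonempty bounded $M_1,M_2$, the Hausdorff distance is $\mathcal{H}(M_1,M_2)=\max\{\sup_{m_1\in M_1}d(m_1,M_2),\sup_{m_2\in M_2}d(m_2,M_1)\}$, $d(y,S)=\inf_{m\in S}\|y-m\|$. *)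

theory Defs
  imports "HOL-Analysis.Analysis"
begin

definition good_cone :: "'a::euclidean_space set \<Rightarrow> bool" where
  "good_cone Q \<longleftrightarrow> closed Q \<and> convex Q \<and> cone Q \<and> 0 \<in> Q \<and>
     Q \<inter> uminus ` Q = {0} \<and> interior Q \<noteq> {}"

definition eff :: "'a::euclidean_space set \<Rightarrow> 'a set \<Rightarrow> 'a set" where
  "eff S Q = {y \<in> S. ((\<lambda>q. y - q) ` Q) \<inter> S = {y}}"

definition Kclass :: "'a::euclidean_space set \<Rightarrow> 'a set \<Rightarrow> 'a set set" where
  "Kclass C P = {K. K \<noteq> {} \<and> compact K \<and> eff K P = eff K C}"

text \<open>Hausdorff distance as in the paper (for nonempty bounded sets).\<close>
definition hdist :: "'a::euclidean_space set \<Rightarrow> 'a set \<Rightarrow> real" where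
  "hdist M1 M2 = max (SUP m1\<in>M1. infdist m1 M2) (SUP m2\<in>M2. infdist m2 M1)"

end

theory Submission
  imports Defs
begin

(* Let y1 be P-efficient, hence C-efficient, in K1, and let h = H(K1,K2). Pick
   k2 \<in> K2 with |y1 - k2| \<le> h and a P-efficient point e2 of K2 dominated by k2, i.e.
   c = k2 - e2 \<in> P; then pick k1 \<in> K1 with |e2 - k1| \<le> h. The vector y1 - k1 lies within
   2h of c. Since P \<setminus> {0} sits uniformly inside int C, the ball of radius \<delta>|c| about c
   lies in C; as y1 is C-efficient, y1 - k1 \<in> C forces y1 = k1. In both cases \<delta>|c| \<le> 2h,
   whence d(y1, E(K2,P)) \<le> |y1 - e2| \<le> (1 + 2/\<delta>) h, and M = 1 + 2/\<delta> works. *)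

lemma mem_eff_iff:
  assumes "0 \<in> Q"
  shows "y \<in> eff K Q \<longleftrightarrow> y \<in> K \<and> (\<forall>q\<in>Q. y - q \<in> K \<longrightarrow> q = 0)"
proof -
  have "(\<lambda>q. y - q) ` Q \<inter> K = {y} \<longleftrightarrow> y \<in> K \<and> (\<forall>q\<in>Q. y - q \<in> K \<longrightarrow> q = 0)"
  proof
    assume eq: "(\<lambda>q. y - q) ` Q \<inter> K = {y}"
    have "q = 0" if "q \<in> Q" "y - q \<in> K" for q
      using that eq by (metis (no_types) IntI image_eqI singletonD eq_iff_diff_eq_0 diff_diff_eq2 diff_self)
    then show "y \<in> K \<and> (\<forall>q\<in>Q. y - q \<in> K \<longrightarrow> q = 0)" using eq by blast
  qed (use assms in \<open>force simp: image_iff\<close>)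
  then show ?thesis unfolding eff_def by blast
qed

lemma convex_cone_sum:
  assumes "convex_cone P" "finite T" "\<And>i. i \<in> T \<Longrightarrow> f i \<in> P"
  shows "sum f T \<in> P"
  using assms(2,3)
  by (induction T rule: finite_induct)
     (auto intro: convex_cone_add[OF assms(1)] convex_cone_contains_0[OF assms(1)])

lemma pointed_cone_sum_eq_0:
  assumes cone: "convex_cone P" and pointed: "P \<inter> uminus ` P = {0}"
    and T: "finite T" and mem: "\<And>i. i \<in> T \<Longrightarrow> f i \<in> P" and sum0: "sum f T = 0"
    and i: "i \<in> T"
  shows "f i = 0"
proof -
  have "f i + sum f (T - {i}) = 0" using sum0 sum.remove[OF T i, of f] by simp
  hence "f i = - sum f (T - {i})" by (simp add: eq_neg_iff_add_eq_0)
  moreover have "sum f (T - {i}) \<in> P" by (rule convex_cone_sum[OF cone]) (use T mem in auto)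
  ultimately have "f i \<in> uminus ` P" by blast
  with mem[OF i] pointed show ?thesis by blast
qed

(* A closed pointed convex cone admits a linear functional positive on P \<setminus> {0}: separate 0
   from the convex hull of the compact base P \<inter> sphere 0 1, which misses 0 by pointedness. *)
lemma pointed_cone_strictly_positive_functional:
  fixes P :: "'a::euclidean_space set"
  assumes closed: "closed P" and cone: "convex_cone P" and pointed: "P \<inter> uminus ` P = {0}"
  shows "\<exists>a. \<forall>p\<in>P. p \<noteq> 0 \<longrightarrow> 0 < a \<bullet> p"
proof -
  define S where "S = P \<inter> sphere 0 1"
  have "compact (convex hull S)"
    unfolding S_def by (intro compact_convex_hull closed_Int_compact closed compact_sphere)
  moreover have "0 \<notin> convex hull S"
  proof
    assume "0 \<in> convex hull S"
    then obtain T u where T: "finite T" "T \<subseteq> S" and u: "\<forall>v\<in>T. 0 \<le> u v" "sum u T = 1"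
      and comb: "(\<Sum>v\<in>T. u v *\<^sub>R v) = 0"
      unfolding convex_hull_explicit by blast
    have "u v = 0" if v: "v \<in> T" for v
    proof -
      have "u v *\<^sub>R v = 0"
        using pointed_cone_sum_eq_0[OF cone pointed T(1) _ comb v] T(2) u(1)
        by (auto simp: S_def intro: convex_cone_scaleR[OF cone])
      moreover have "v \<noteq> 0" using v T(2) by (auto simp: S_def)
      ultimately show ?thesis by simp
    qed
    then show False using u(2) by simp
  qed
  ultimately obtain a b where ab: "0 < b" "\<forall>x\<in>convex hull S. b < a \<bullet> x"
    using separating_hyperplane_closed_0[OF convex_convex_hull compact_imp_closed] by blast
  have "0 < a \<bullet> p" if p: "p \<in> P" "p \<noteq> 0" for p
  proof -
    have "(1 / norm p) *\<^sub>R p \<in> S"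
      using p by (auto simp: S_def norm_divide intro: convex_cone_scaleR[OF cone])
    then have "b < (a \<bullet> p) / norm p" using ab(2) hull_inc by fastforce
    with ab(1) have "0 < (a \<bullet> p) / norm p" by linarith
    with p(2) show ?thesis by (simp add: zero_less_divide_iff)
  qed
  then show ?thesis by blast
qed

(* Every point k of a compact set K dominates some efficient point: minimise the positive
   functional over the part of K below k. *)
lemma exists_dominated_efficient_point:
  fixes P :: "'a::euclidean_space set"
  assumes closed: "closed P" and cone: "convex_cone P" and pointed: "P \<inter> uminus ` P = {0}"
    and K: "compact K" and k: "k \<in> K"
  shows "\<exists>e\<in>eff K P. k - e \<in> P"
proof -
  obtain a where a: "\<And>p. p \<in> P \<Longrightarrow> p \<noteq> 0 \<Longrightarrow> 0 < a \<bullet> p"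
    using pointed_cone_strictly_positive_functional[OF closed cone pointed] by blast
  define L where "L = K \<inter> (\<lambda>y. k - y) -` P"
  have "compact L"
    unfolding L_def
    by (intro compact_Int_closed K continuous_closed_vimage closed) (intro continuous_intros)
  moreover have "k \<in> L" using k convex_cone_contains_0[OF cone] by (simp add: L_def)
  ultimately obtain e where e: "e \<in> L" and min: "\<And>z. z \<in> L \<Longrightarrow> a \<bullet> e \<le> a \<bullet> z"
    using continuous_attains_inf[of L "\<lambda>y. a \<bullet> y"] continuous_on_inner[OF continuous_on_const continuous_on_id]
    by blast
  have "q = 0" if q: "q \<in> P" "e - q \<in> K" for q
  proof -
    have "k - (e - q) = (k - e) + q" by simp
    also have "\<dots> \<in> P" using q e convex_cone_add[OF cone] by (simp add: L_def)
    finally have "e - q \<in> L" using q(2) by (simp add: L_def)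
    then have "a \<bullet> q \<le> 0" using min[of "e - q"] by (simp add: inner_diff_right)
    with a q(1) show "q = 0" by force
  qed
  then have "e \<in> eff K P"
    using e by (simp add: mem_eff_iff[OF convex_cone_contains_0[OF cone]] L_def)
  with e show ?thesis by (auto simp: L_def)
qed

(* If P \<setminus> {0} lies in int C, then it lies there uniformly: the ball of radius \<delta>|c| about
   any c \<in> P is contained in C, by compactness of the base of P. *)
lemma uniform_cone_margin:
  fixes P C :: "'a::euclidean_space set"
  assumes closed: "closed P" and "cone P" and "cone C" and "0 \<in> C"
    and inside: "P \<subseteq> interior C \<union> {0}"
  shows "\<exists>\<delta>>0. \<delta> \<le> 1 \<and> (\<forall>c\<in>P. cball c (\<delta> * norm c) \<subseteq> C)"
proof -
  define S where "S = P \<inter> sphere 0 1"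
  have "compact S" unfolding S_def by (intro closed_Int_compact closed compact_sphere)
  moreover have "S \<subseteq> interior C" using inside by (auto simp: S_def)
  ultimately obtain \<epsilon> where "\<epsilon> > 0" and "(\<Union>x\<in>S. cball x \<epsilon>) \<subseteq> interior C"
    using compact_subset_open_imp_cball_epsilon_subset[OF _ open_interior] by metis
  then have margin: "\<And>x. x \<in> S \<Longrightarrow> cball x \<epsilon> \<subseteq> interior C" by blast
  define \<delta> where "\<delta> = min \<epsilon> 1"
  have "cball c (\<delta> * norm c) \<subseteq> C" if c: "c \<in> P" for c
  proof (cases "c = 0")
    case True
    then show ?thesis using \<open>0 \<in> C\<close> by simp
  next
    case False
    then have nc: "norm c > 0" by simp
    have "(1 / norm c) *\<^sub>R c \<in> P" by (rule mem_cone[OF \<open>cone P\<close> c]) simp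
    moreover have "norm ((1 / norm c) *\<^sub>R c) = 1" using nc by simp
    ultimately have x: "(1 / norm c) *\<^sub>R c \<in> S" by (simp add: S_def)
    show ?thesis
    proof
      fix z assume "z \<in> cball c (\<delta> * norm c)"
      then have z: "dist c z \<le> \<delta> * norm c" by simp
      have "dist ((1 / norm c) *\<^sub>R c) ((1 / norm c) *\<^sub>R z) = dist c z / norm c"
        unfolding dist_norm scaleR_diff_right[symmetric] using nc by simp
      also have "\<dots> \<le> \<delta>" using z nc by (simp add: divide_le_eq)
      also have "\<dots> \<le> \<epsilon>" by (simp add: \<delta>_def)
      finally have "(1 / norm c) *\<^sub>R z \<in> interior C" using margin[OF x] by auto
      then have "(1 / norm c) *\<^sub>R z \<in> C" using interior_subset by blast
      then have "norm c *\<^sub>R ((1 / norm c) *\<^sub>R z) \<in> C" by (rule mem_cone[OF \<open>cone C\<close>]) simp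
      then show "z \<in> C" using nc by simp
    qed
  qed
  moreover have "\<delta> > 0" "\<delta> \<le> 1" using \<open>\<epsilon> > 0\<close> by (auto simp: \<delta>_def)
  ultimately show ?thesis by blast
qed

lemma hdist_commute: "hdist A B = hdist B A"
  unfolding hdist_def by (rule max.commute)

lemma infdist_le_hdist:
  fixes A B :: "'a::euclidean_space set"
  assumes "bounded A" "B \<noteq> {}" "y \<in> A"
  shows "infdist y B \<le> hdist A B"
proof -
  obtain b where b: "b \<in> B" using assms(2) by blast
  obtain R where R: "\<And>x. x \<in> A \<Longrightarrow> norm x \<le> R" using assms(1) by (auto simp: bounded_iff)
  have "infdist m B \<le> R + norm b" if "m \<in> A" for m
  proof -
    have "infdist m B \<le> dist m b" using b by (rule infdist_le)
    also have "\<dots> \<le> norm m + norm b" by (simp add: dist_norm norm_triangle_ineq4)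
    finally show ?thesis using R[OF that] by linarith
  qed
  then have "bdd_above ((\<lambda>m. infdist m B) ` A)" by (rule bdd_aboveI2)
  then have "infdist y B \<le> (SUP m\<in>A. infdist m B)" using assms(3) by (intro cSUP_upper)
  then show ?thesis unfolding hdist_def by linarith
qed

lemma hdist_le:
  assumes "A \<noteq> {}" "B \<noteq> {}"
    and "\<And>a. a \<in> A \<Longrightarrow> infdist a B \<le> r" and "\<And>b. b \<in> B \<Longrightarrow> infdist b A \<le> r"
  shows "hdist A B \<le> r"
  unfolding hdist_def using assms by (simp add: cSUP_least)

lemma infdist_efficient_le_hdist:
  fixes P C K1 K2 :: "'a::euclidean_space set"
  assumes closed: "closed P" and cone: "convex_cone P" and pointed: "P \<inter> uminus ` P = {0}"
    and \<delta>: "0 < \<delta>" "\<delta> \<le> 1" and margin: "\<And>c. c \<in> P \<Longrightarrow> cball c (\<delta> * norm c) \<subseteq> C"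
    and K1: "compact K1" and K2: "compact K2" "K2 \<noteq> {}" and y1: "y1 \<in> eff K1 C"
  shows "infdist y1 (eff K2 P) \<le> (1 + 2 / \<delta>) * hdist K1 K2"
proof -
  define h where "h = hdist K1 K2"
  have "0 \<in> C" using margin[OF convex_cone_contains_0[OF cone]] by simp
  then have y1K1: "y1 \<in> K1" and y1_min: "\<And>q. q \<in> C \<Longrightarrow> y1 - q \<in> K1 \<Longrightarrow> q = 0"
    using y1 by (auto simp: mem_eff_iff)
  obtain k2 where k2: "k2 \<in> K2" "dist y1 k2 = infdist y1 K2"
    using infdist_attains_inf[OF compact_imp_closed[OF K2(1)] K2(2)] by metis
  have dist_y1_k2: "dist y1 k2 \<le> h"
    using infdist_le_hdist[OF compact_imp_bounded[OF K1] K2(2) y1K1] k2 by (simp add: h_def)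
  obtain e2 where e2: "e2 \<in> eff K2 P" and c: "k2 - e2 \<in> P"
    using exists_dominated_efficient_point[OF closed cone pointed K2(1) k2(1)] by blast
  have e2K2: "e2 \<in> K2" using e2 unfolding eff_def by blast
  obtain k1 where k1: "k1 \<in> K1" "dist e2 k1 = infdist e2 K1"
    using infdist_attains_inf[OF compact_imp_closed[OF K1], of e2] y1K1 by (metis empty_iff)
  have dist_e2_k1: "dist e2 k1 \<le> h"
    using infdist_le_hdist[OF compact_imp_bounded[OF K2(1)] _ e2K2] k1 y1K1
    by (auto simp: h_def hdist_commute)
  (* The displacement k2 - e2 is short: y1 - k1 is within 2h of it, and y1 - k1 cannot lie
     in C unless it vanishes, because y1 is C-efficient in K1. *)
  define z where "z = y1 - k1"
  have "norm (z - (k2 - e2)) = norm ((y1 - k2) + (e2 - k1))" by (simp add: z_def algebra_simps)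
  also have "\<dots> \<le> 2 * h"
    using norm_triangle_ineq[of "y1 - k2" "e2 - k1"] dist_y1_k2 dist_e2_k1 by (simp add: dist_norm)
  finally have close: "norm (z - (k2 - e2)) \<le> 2 * h" .
  have short: "\<delta> * norm (k2 - e2) \<le> 2 * h"
  proof (cases "z \<in> cball (k2 - e2) (\<delta> * norm (k2 - e2))")
    case True
    then have "z \<in> C" using margin[OF c] by blast
    moreover have "y1 - z \<in> K1" using k1(1) by (simp add: z_def)
    ultimately have "z = 0" by (rule y1_min)
    then have "norm (k2 - e2) \<le> 2 * h" using close by (simp add: norm_minus_commute)
    moreover have "\<delta> * norm (k2 - e2) \<le> norm (k2 - e2)"
      using mult_right_mono[OF \<delta>(2) norm_ge_zero] by simp
    ultimately show ?thesis by linarith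
  next
    case False
    then show ?thesis using close by (simp add: dist_norm norm_minus_commute)
  qed
  have "infdist y1 (eff K2 P) \<le> dist y1 e2" using e2 by (rule infdist_le)
  also have "\<dots> \<le> dist y1 k2 + dist k2 e2" by (rule dist_triangle)
  also have "\<dots> \<le> h + 2 * h / \<delta>"
  proof -
    have "dist k2 e2 \<le> 2 * h / \<delta>"
      using short \<delta>(1) by (simp add: dist_norm pos_le_divide_eq mult.commute)
    with dist_y1_k2 show ?thesis by linarith
  qed
  also have "\<dots> = (1 + 2 / \<delta>) * h" by (simp add: algebra_simps)
  finally show ?thesis by (simp add: h_def)
qed

lemma good_coneD:
  assumes "good_cone Q"
  shows "closed Q" "cone Q" "convex_cone Q" "Q \<inter> uminus ` Q = {0}"
  using assms convex_cone[of Q] unfolding good_cone_def convex_cone_iff by auto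

lemma nonempty_efficient_set:
  fixes P :: "'a::euclidean_space set"
  assumes "good_cone P" "compact K" "K \<noteq> {}"
  shows "eff K P \<noteq> {}"
  using exists_dominated_efficient_point[OF good_coneD(1,3,4)[OF assms(1)] assms(2)] assms(3) by blast

theorem proposition4p13:
  fixes C P :: "'a::euclidean_space set"
  assumes "good_cone P" and "good_cone C"
    and "P \<subseteq> interior C \<union> {0}"
  shows "\<exists>M\<ge>0. \<forall>K1\<in>Kclass C P. \<forall>K2\<in>Kclass C P.
           hdist (eff K1 P) (eff K2 P) \<le> M * hdist K1 K2"
proof -
  note P = good_coneD[OF assms(1)] and C = good_coneD[OF assms(2)]
  obtain \<delta> where \<delta>: "0 < \<delta>" "\<delta> \<le> 1" and margin: "\<forall>c\<in>P. cball c (\<delta> * norm c) \<subseteq> C"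
    using uniform_cone_margin[OF P(1,2) C(2) convex_cone_contains_0[OF C(3)] assms(3)] by blast
  have one_sided: "infdist y (eff K' P) \<le> (1 + 2 / \<delta>) * hdist K K'"
    if "K \<in> Kclass C P" "K' \<in> Kclass C P" "y \<in> eff K P" for K K' y
    using that infdist_efficient_le_hdist[OF P(1,3,4) \<delta>, of C K K' y] margin
    by (auto simp: Kclass_def)
  have "hdist (eff K1 P) (eff K2 P) \<le> (1 + 2 / \<delta>) * hdist K1 K2"
    if K: "K1 \<in> Kclass C P" "K2 \<in> Kclass C P" for K1 K2
  proof (rule hdist_le)
    show "eff K1 P \<noteq> {}" "eff K2 P \<noteq> {}"
      using nonempty_efficient_set[OF assms(1)] K unfolding Kclass_def by blast+
  qed (use one_sided[OF K] one_sided[OF K(2,1)] in \<open>auto simp: hdist_commute\<close>)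
  moreover have "0 \<le> 1 + 2 / \<delta>" using \<delta>(1) by simp
  ultimately show ?thesis by blast
qed

end
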